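(* Let $\mathcal M$ satisfy sufficient demand and let $(\hat X,\hat p)$ be a market equilibrium of $\mathcal M$. Then there exist $\hat\lambda\in\mathbb R^A$ with $\hat\lambda_i>0$ for all $i$, and $\hat\alpha\ge0$, such that $\hat X$ is an optimal solution of $LP(\hat\lambda)$ and $(\hat\alpha,\hat p)$ is an optimal solution of $DLP(\hat\lambda)$.
   Context: A market $\mathcal M$ consists of a finite set $A$ of agents, a finite set $G$ of divisible goods each with supply $1$, a finite index set $C$; agent $i$ has real coefficients $a_{ijk}$, requirements $r_{ik}\ge0$, delays $d_{ij}\ge0$, budget $m_i>0$. CC$(i)$: $\sum_ja_{ijk}x_{ij}\ge r_{ik}$ for all $k$, $x_{ij}\ge0$. $(X,p)$ is a market equilibrium if $\sum_ix_{ij}\le1$ for all $j$, each $\mathbf x_i$ minimizes $\sum_jd_{ij}x_{ij}$ subject to CC$(i)$ and $\sum_jp_jx_{ij}\le m_i$, and $\sum_ix_{ij}<1\Rightarrow p_j=0$. Sufficient demand: for every agent $i$, every optimal solution of "minimize $\sum_jd_{ij}x_{ij}$ s.t. CC$(i)$" has some $j$ with $x_{ij}>1$. $LP(\lambda)$: minimize $\sum_i\lambda_i\sum_jd_{ij}x_{ij}$ s.t. $\sum_ja_{ijk}x_{ij}\ge r_{ik}$ for all $(i,k)$, $\sum_ix_{ij}\le1$ for all $j$, $x\ge0$. $DLP(\lambda)$: maximize $\sum_{i,k}r_{ik}\alpha_{ik}-\sum_jp_j$ s.t. $\lambda_id_{ij}\ge\sum_ka_{ijk}\alpha_{ik}-p_j$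 for all $(i,j)$, $\alpha\ge0,p\ge0$. *)

theory Defs
  imports Complex_Main
begin

record ('a, 'g, 'c) market =
  agents :: "'a set"
  goods  :: "'g set"
  cidx   :: "'c set"
  coef   :: "'a \<Rightarrow> 'g \<Rightarrow> 'c \<Rightarrow> real"
  req    :: "'a \<Rightarrow> 'c \<Rightarrow> real"
  delay  :: "'a \<Rightarrow> 'g \<Rightarrow> real"
  budget :: "'a \<Rightarrow> real"

definition valid_market :: "('a, 'g, 'c) market \<Rightarrow> bool" where
  "valid_market M \<longleftrightarrow>
     finite (agents M) \<and> finite (goods M) \<and> finite (cidx M) \<and>
     (\<forall>i\<in>agents M. \<forall>k\<in>cidx M. req M i k \<ge> 0) \<and>
     (\<forall>i\<in>agents M. \<forall>j\<in>goods M. delay M i j \<ge> 0) \<and>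
     (\<forall>i\<in>agents M. budget M i > 0)"

definition CC :: "('a, 'g, 'c) market \<Rightarrow> 'a \<Rightarrow> ('g \<Rightarrow> real) \<Rightarrow> bool" where
  "CC M i x \<longleftrightarrow>
     (\<forall>k\<in>cidx M. (\<Sum>j\<in>goods M. coef M i j k * x j) \<ge> req M i k) \<and>
     (\<forall>j\<in>goods M. x j \<ge> 0)"

definition cost :: "('a, 'g, 'c) market \<Rightarrow> 'a \<Rightarrow> ('g \<Rightarrow> real) \<Rightarrow> real" where
  "cost M i x = (\<Sum>j\<in>goods M. delay M i j * x j)"

definition optimal_bundle :: "('a, 'g, 'c) market \<Rightarrow> ('g \<Rightarrow> real) \<Rightarrow> 'a \<Rightarrow> ('g \<Rightarrow> real) \<Rightarrow> bool" where
  "optimal_bundle M p i x \<longleftrightarrow>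
     CC M i x \<and> (\<Sum>j\<in>goods M. p j * x j) \<le> budget M i \<and>
     (\<forall>y. CC M i y \<and> (\<Sum>j\<in>goods M. p j * y j) \<le> budget M i \<longrightarrow> cost M i x \<le> cost M i y)"

definition market_equilibrium :: "('a, 'g, 'c) market \<Rightarrow> ('a \<Rightarrow> 'g \<Rightarrow> real) \<Rightarrow> ('g \<Rightarrow> real) \<Rightarrow> bool" where
  "market_equilibrium M X p \<longleftrightarrow>
     (\<forall>j\<in>goods M. p j \<ge> 0) \<and>
     (\<forall>j\<in>goods M. (\<Sum>i\<in>agents M. X i j) \<le> 1) \<and>
     (\<forall>i\<in>agents M. optimal_bundle M p i (X i)) \<and>
     (\<forall>j\<in>goods M. (\<Sum>i\<in>agents M. X i j) < 1 \<longrightarrow> p j = 0)"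

definition sufficient_demand :: "('a, 'g, 'c) market \<Rightarrow> bool" where
  "sufficient_demand M \<longleftrightarrow>
     (\<forall>i\<in>agents M. \<forall>x. (CC M i x \<and> (\<forall>y. CC M i y \<longrightarrow> cost M i x \<le> cost M i y))
        \<longrightarrow> (\<exists>j\<in>goods M. x j > 1))"

definition LP_feasible :: "('a, 'g, 'c) market \<Rightarrow> ('a \<Rightarrow> 'g \<Rightarrow> real) \<Rightarrow> bool" where
  "LP_feasible M X \<longleftrightarrow>
     (\<forall>i\<in>agents M. \<forall>k\<in>cidx M. (\<Sum>j\<in>goods M. coef M i j k * X i j) \<ge> req M i k) \<and>
     (\<forall>j\<in>goods M. (\<Sum>i\<in>agents M. X i j) \<le> 1) \<and>
     (\<forall>i\<in>agents M. \<forall>j\<in>goods M. X i j \<ge> 0)"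

definition LP_obj :: "('a, 'g, 'c) market \<Rightarrow> ('a \<Rightarrow> real) \<Rightarrow> ('a \<Rightarrow> 'g \<Rightarrow> real) \<Rightarrow> real" where
  "LP_obj M lam X = (\<Sum>i\<in>agents M. lam i * (\<Sum>j\<in>goods M. delay M i j * X i j))"

definition LP_optimal :: "('a, 'g, 'c) market \<Rightarrow> ('a \<Rightarrow> real) \<Rightarrow> ('a \<Rightarrow> 'g \<Rightarrow> real) \<Rightarrow> bool" where
  "LP_optimal M lam X \<longleftrightarrow>
     LP_feasible M X \<and> (\<forall>Y. LP_feasible M Y \<longrightarrow> LP_obj M lam X \<le> LP_obj M lam Y)"

definition DLP_feasible :: "('a, 'g, 'c) market \<Rightarrow> ('a \<Rightarrow> real) \<Rightarrow> ('a \<Rightarrow> 'c \<Rightarrow> real) \<Rightarrow> ('g \<Rightarrow> real) \<Rightarrow> bool" where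
  "DLP_feasible M lam \<alpha> p \<longleftrightarrow>
     (\<forall>i\<in>agents M. \<forall>j\<in>goods M.
        lam i * delay M i j \<ge> (\<Sum>k\<in>cidx M. coef M i j k * \<alpha> i k) - p j) \<and>
     (\<forall>i\<in>agents M. \<forall>k\<in>cidx M. \<alpha> i k \<ge> 0) \<and>
     (\<forall>j\<in>goods M. p j \<ge> 0)"

definition DLP_obj :: "('a, 'g, 'c) market \<Rightarrow> ('a \<Rightarrow> 'c \<Rightarrow> real) \<Rightarrow> ('g \<Rightarrow> real) \<Rightarrow> real" where
  "DLP_obj M \<alpha> p = (\<Sum>i\<in>agents M. \<Sum>k\<in>cidx M. req M i k * \<alpha> i k) - (\<Sum>j\<in>goods M. p j)"

definition DLP_optimal :: "('a, 'g, 'c) market \<Rightarrow> ('a \<Rightarrow> real) \<Rightarrow> ('a \<Rightarrow> 'c \<Rightarrow> real) \<Rightarrow> ('g \<Rightarrow> real) \<Rightarrow> bool" where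
  "DLP_optimal M lam \<alpha> p \<longleftrightarrow>
     DLP_feasible M lam \<alpha> p \<and>
     (\<forall>\<beta> q. DLP_feasible M lam \<beta> q \<longrightarrow> DLP_obj M \<beta> q \<le> DLP_obj M \<alpha> p)"

end

theory Submission
  imports Defs
begin

text \<open>Each agent's problem is a linear program in which the budget is one more covering
  constraint. By LP duality (here derived from Farkas' lemma, which in turn follows from
  Fourier--Motzkin elimination) an optimal bundle comes with multipliers \<open>\<alpha> \<ge> 0\<close> for the
  covering constraints and \<open>\<mu> \<ge> 0\<close> for the budget. Sufficient demand forces \<open>\<mu> > 0\<close>:
  otherwise the bundle would be optimal even without a budget and hence exceed the supply of
  some good. Scaling by \<open>\<lambda>\<^sub>i = 1 / \<mu>\<close> makes \<open>(\<alpha> / \<mu>, p)\<close> feasible for \<open>DLP(\<lambda>)\<close>; every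
  budget is then spent, and market clearing gives \<open>\<Sum>\<^sub>i m\<^sub>i = \<Sum>\<^sub>j p\<^sub>j\<close>, so the primal
  and dual objectives coincide and weak duality gives optimality of both.\<close>

text \<open>A pair \<open>(a, \<beta>)\<close> stands for the linear constraint \<open>\<Sum>\<^sub>j a j * x j \<le> \<beta>\<close>.\<close>
inductive_set constraint_cone :: "(('v \<Rightarrow> real) \<times> real) set \<Rightarrow> (('v \<Rightarrow> real) \<times> real) set"
  for C where
  base: "c \<in> C \<Longrightarrow> c \<in> constraint_cone C"
| add: "c \<in> constraint_cone C \<Longrightarrow> d \<in> constraint_cone C \<Longrightarrow>
        (\<lambda>j. fst c j + fst d j, snd c + snd d) \<in> constraint_cone C"
| scale: "c \<in> constraint_cone C \<Longrightarrow> t \<ge> 0 \<Longrightarrow> (\<lambda>j. t * fst c j, t * snd c) \<in> constraint_cone C"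

lemma constraint_cone_coeff_zero:
  assumes "c \<in> constraint_cone C" "\<forall>d\<in>C. fst d v = 0"
  shows "fst c v = 0"
  using assms by (induction rule: constraint_cone.induct) auto

lemma constraint_cone_nonneg_combination:
  assumes "finite L" "c \<in> constraint_cone ((\<lambda>l. (A l, b l)) ` L)"
  shows "\<exists>y. (\<forall>l\<in>L. y l \<ge> 0) \<and> (\<forall>j. fst c j = (\<Sum>l\<in>L. y l * A l j)) \<and>
             snd c = (\<Sum>l\<in>L. y l * b l)"
  using assms(2)
proof (induction rule: constraint_cone.induct)
  case (base c)
  then obtain l where "l \<in> L" "c = (A l, b l)" by auto
  then show ?case
    using assms(1) by (intro exI[of _ "\<lambda>l'. of_bool (l = l')"]) simp
next
  case (add c d)
  then obtain y z where
    "(\<forall>l\<in>L. y l \<ge> 0) \<and> (\<forall>j. fst c j = (\<Sum>l\<in>L. y l * A l j)) \<and> snd c = (\<Sum>l\<in>L. y l * b l)"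
    "(\<forall>l\<in>L. z l \<ge> 0) \<and> (\<forall>j. fst d j = (\<Sum>l\<in>L. z l * A l j)) \<and> snd d = (\<Sum>l\<in>L. z l * b l)"
    by blast
  then show ?case
    by (intro exI[of _ "\<lambda>l. y l + z l"]) (simp add: distrib_right sum.distrib)
next
  case (scale c t)
  then obtain y where
    "(\<forall>l\<in>L. y l \<ge> 0) \<and> (\<forall>j. fst c j = (\<Sum>l\<in>L. y l * A l j)) \<and> snd c = (\<Sum>l\<in>L. y l * b l)"
    by blast
  then show ?case
    using scale.hyps(2) by (intro exI[of _ "\<lambda>l. t * y l"]) (simp add: sum_distrib_left mult.assoc)
qed

definition fm_combine ::
    "'v \<Rightarrow> ('v \<Rightarrow> real) \<times> real \<Rightarrow> ('v \<Rightarrow> real) \<times> real \<Rightarrow> ('v \<Rightarrow> real) \<times> real" where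
  "fm_combine v c d =
     (\<lambda>j. (- fst d v) * fst c j + fst c v * fst d j, (- fst d v) * snd c + fst c v * snd d)"

definition fm_eliminate :: "'v \<Rightarrow> (('v \<Rightarrow> real) \<times> real) set \<Rightarrow> (('v \<Rightarrow> real) \<times> real) set" where
  "fm_eliminate v C = {c\<in>C. fst c v = 0} \<union>
     (\<lambda>(c, d). fm_combine v c d) ` ({c\<in>C. fst c v > 0} \<times> {d\<in>C. fst d v < 0})"

lemma finite_fm_eliminate: "finite C \<Longrightarrow> finite (fm_eliminate v C)"
  by (simp add: fm_eliminate_def)

lemma fm_eliminate_coeff_zero: "c \<in> fm_eliminate v C \<Longrightarrow> fst c v = 0"
  by (auto simp: fm_eliminate_def fm_combine_def)

lemma constraint_cone_fm_eliminate:
  assumes "e \<in> constraint_cone (fm_eliminate v C)"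
  shows "e \<in> constraint_cone C"
  using assms
proof (induction rule: constraint_cone.induct)
  case (base e)
  show ?case
  proof (cases "e \<in> C")
    case True
    then show ?thesis by (rule constraint_cone.base)
  next
    case False
    with base obtain c d where cd: "c \<in> C" "d \<in> C" "fst c v > 0" "fst d v < 0"
      and e: "e = fm_combine v c d"
      by (auto simp: fm_eliminate_def)
    have "- fst d v \<ge> 0" "fst c v \<ge> 0" using cd by auto
    from constraint_cone.add[OF constraint_cone.scale[OF constraint_cone.base[OF cd(1)] this(1)]
                                constraint_cone.scale[OF constraint_cone.base[OF cd(2)] this(2)]]
    show ?thesis by (simp add: e fm_combine_def)
  qed
next
  case (add c d)
  then show ?case by (intro constraint_cone.add)
next
  case (scale c t)
  then show ?case by (intro constraint_cone.scale)
qed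

text \<open>The combination of an upper and a lower bound on \<open>x v\<close> holds exactly when the
  lower bound does not exceed the upper one.\<close>
lemma fm_combine_bounds:
  fixes x :: "'v \<Rightarrow> real" and F :: "'v set"
  defines "S \<equiv> \<lambda>c. \<Sum>j\<in>F. fst c j * x j"
  assumes c: "fst c v > 0" and d: "fst d v < 0"
    and "S (fm_combine v c d) \<le> snd (fm_combine v c d)"
  shows "(snd d - S d) / fst d v \<le> (snd c - S c) / fst c v"
proof -
  have "S (fm_combine v c d) = (- fst d v) * S c + fst c v * S d"
    by (simp add: S_def fm_combine_def sum_distrib_left sum.distrib[symmetric] algebra_simps)
  with assms(4) have "0 \<le> (- fst d v) * (snd c - S c) + fst c v * (snd d - S d)"
    by (simp add: fm_combine_def algebra_simps)
  moreover have "(snd c - S c) / fst c v - (snd d - S d) / fst d v =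
      ((- fst d v) * (snd c - S c) + fst c v * (snd d - S d)) / (fst c v * (- fst d v))"
    using c d by (simp add: field_simps)
  moreover have "fst c v * (- fst d v) > 0" using c d by (simp add: mult_pos_neg)
  ultimately have "0 \<le> (snd c - S c) / fst c v - (snd d - S d) / fst d v"
    by (metis divide_nonneg_pos)
  then show ?thesis by simp
qed

lemma fm_eliminate_solution_extends:
  fixes x :: "'v \<Rightarrow> real"
  assumes "finite F" "finite C" "v \<notin> F"
    and sol: "\<forall>c\<in>fm_eliminate v C. (\<Sum>j\<in>F. fst c j * x j) \<le> snd c"
  shows "\<exists>t. \<forall>c\<in>C. (\<Sum>j\<in>insert v F. fst c j * (x(v := t)) j) \<le> snd c"
proof -
  define S where "S c = (\<Sum>j\<in>F. fst c j * x j)" for c :: "('v \<Rightarrow> real) \<times> real"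
  define q where "q c = (snd c - S c) / fst c v" for c :: "('v \<Rightarrow> real) \<times> real"
  define P where "P = {c\<in>C. fst c v > 0}"
  define N where "N = {c\<in>C. fst c v < 0}"
  define t where "t = (if N = {} then if P = {} then 0 else Min (q ` P) else Max (q ` N))"
  have "finite P" "finite N" using assms(2) by (auto simp: P_def N_def)
  have lower_le_upper: "q d \<le> q c" if "c \<in> P" "d \<in> N" for c d
    unfolding q_def S_def
    by (rule fm_combine_bounds) (use that sol in \<open>auto simp: P_def N_def fm_eliminate_def\<close>)
  have t_upper: "t \<le> q c" if "c \<in> P" for c
    using that \<open>finite P\<close> \<open>finite N\<close> lower_le_upper by (auto simp: t_def)
  have t_lower: "q d \<le> t" if "d \<in> N" for d
    using that \<open>finite N\<close> by (auto simp: t_def)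
  have "fst c v * t + S c \<le> snd c" if "c \<in> C" for c
  proof (cases "fst c v" "0::real" rule: linorder_cases)
    case less
    with t_lower[of c] that have "fst c v * q c \<ge> fst c v * t"
      by (simp add: N_def mult_le_cancel_left)
    with less show ?thesis by (simp add: q_def)
  next
    case equal
    with that sol show ?thesis by (simp add: S_def fm_eliminate_def)
  next
    case greater
    with t_upper[of c] that have "fst c v * t \<le> fst c v * q c" by (simp add: P_def)
    with greater show ?thesis by (simp add: q_def)
  qed
  moreover have "(\<Sum>j\<in>insert v F. fst c j * (x(v := t)) j) = fst c v * t + S c" for c
    using assms(1,3) by (auto simp: S_def intro!: sum.cong)
  ultimately show ?thesis by (intro exI[of _ t]) simp
qed

lemma fourier_motzkin:
  fixes C :: "(('v \<Rightarrow> real) \<times> real) set"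
  assumes "finite J" "finite C"
  shows "(\<exists>x. \<forall>c\<in>C. (\<Sum>j\<in>J. fst c j * x j) \<le> snd c) \<or>
         (\<exists>c\<in>constraint_cone C. (\<forall>j\<in>J. fst c j = 0) \<and> snd c < 0)"
  using assms
proof (induction J arbitrary: C rule: finite_induct)
  case empty
  show ?case
  proof (cases "\<forall>c\<in>C. 0 \<le> snd c")
    case False
    then obtain c where "c \<in> C" "snd c < 0" by force
    then show ?thesis by (auto intro: constraint_cone.base)
  qed auto
next
  case (insert v F)
  from insert.IH[OF finite_fm_eliminate[OF insert.prems, of v]]
  show ?case
  proof (elim disjE exE bexE conjE)
    fix x assume "\<forall>c\<in>fm_eliminate v C. (\<Sum>j\<in>F. fst c j * x j) \<le> snd c"
    from fm_eliminate_solution_extends[OF insert.hyps(1) insert.prems insert.hyps(2) this]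
    show ?thesis by blast
  next
    fix c assume c: "c \<in> constraint_cone (fm_eliminate v C)" "\<forall>j\<in>F. fst c j = 0" "snd c < 0"
    have "fst c v = 0"
      using c(1) by (rule constraint_cone_coeff_zero) (simp add: fm_eliminate_coeff_zero)
    with c constraint_cone_fm_eliminate[OF c(1)] show ?thesis by auto
  qed
qed

lemma farkas:
  fixes A :: "'l \<Rightarrow> 'v \<Rightarrow> real" and b :: "'l \<Rightarrow> real"
  assumes "finite J" "finite L"
  shows "(\<exists>x. \<forall>l\<in>L. (\<Sum>j\<in>J. A l j * x j) \<le> b l) \<or>
         (\<exists>y. (\<forall>l\<in>L. y l \<ge> 0) \<and> (\<forall>j\<in>J. (\<Sum>l\<in>L. y l * A l j) = 0) \<and>
              (\<Sum>l\<in>L. y l * b l) < 0)"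
  using fourier_motzkin[OF assms(1) finite_imageI[OF assms(2)], of "\<lambda>l. (A l, b l)"]
proof (elim disjE exE bexE conjE)
  fix c assume "c \<in> constraint_cone ((\<lambda>l. (A l, b l)) ` L)" "\<forall>j\<in>J. fst c j = 0" "snd c < 0"
  with constraint_cone_nonneg_combination[OF assms(2)] show ?thesis by metis
qed auto

lemma farkas_nonneg:
  fixes A :: "'l \<Rightarrow> 'v \<Rightarrow> real" and b :: "'l \<Rightarrow> real"
  assumes "finite J" "finite L"
  shows "(\<exists>x. (\<forall>j\<in>J. x j \<ge> 0) \<and> (\<forall>l\<in>L. (\<Sum>j\<in>J. A l j * x j) \<le> b l)) \<or>
         (\<exists>y. (\<forall>l\<in>L. y l \<ge> 0) \<and> (\<forall>j\<in>J. (\<Sum>l\<in>L. y l * A l j) \<ge> 0) \<and>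
              (\<Sum>l\<in>L. y l * b l) < 0)"
proof -
  define A' where "A' r = (case r of Inl l \<Rightarrow> A l | Inr j \<Rightarrow> (\<lambda>j'. - of_bool (j = j')))"
    for r :: "'l + 'v"
  define b' where "b' r = (case r of Inl l \<Rightarrow> b l | Inr j \<Rightarrow> 0)" for r :: "'l + 'v"
  from farkas[OF assms(1) finite_Plus[OF assms(2,1)], of A' b']
  show ?thesis
  proof (elim disjE exE conjE)
    fix x assume x: "\<forall>r\<in>L <+> J. (\<Sum>j\<in>J. A' r j * x j) \<le> b' r"
    have "x j \<ge> 0" if "j \<in> J" for j
      using x[rule_format, OF InrI[OF that]] assms(1) that by (simp add: A'_def b'_def sum_negf)
    moreover have "(\<Sum>j\<in>J. A l j * x j) \<le> b l" if "l \<in> L" for l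
      using x[rule_format, OF InlI[OF that]] by (simp add: A'_def b'_def)
    ultimately show ?thesis by blast
  next
    fix y assume y0: "\<forall>r\<in>L <+> J. y r \<ge> 0"
      and col: "\<forall>j\<in>J. (\<Sum>r\<in>L <+> J. y r * A' r j) = 0"
      and neg: "(\<Sum>r\<in>L <+> J. y r * b' r) < 0"
    have "(\<Sum>r\<in>L <+> J. y r * A' r j) = (\<Sum>l\<in>L. y (Inl l) * A l j) - y (Inr j)"
      if "j \<in> J" for j
      using assms that by (simp add: sum.Plus A'_def sum_negf mult.commute[of _ "of_bool _"])
    with col y0 have "\<forall>j\<in>J. (\<Sum>l\<in>L. y (Inl l) * A l j) \<ge> 0" by force
    moreover have "(\<Sum>l\<in>L. y (Inl l) * b l) < 0"
      using neg assms by (simp add: sum.Plus b'_def comp_def)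
    ultimately show ?thesis using y0 by (intro disjI2 exI[of _ "\<lambda>l. y (Inl l)"]) auto
  qed
qed

lemma sum_insert_None_Some:
  "finite A \<Longrightarrow> (\<Sum>v\<in>insert None (Some ` A). f v) = f None + (\<Sum>a\<in>A. f (Some a))"
  by (simp add: sum.reindex)

lemma lp_optimum_homogeneous_bound:
  fixes a :: "'l \<Rightarrow> 'j \<Rightarrow> real" and b :: "'l \<Rightarrow> real" and d xs z :: "'j \<Rightarrow> real"
  assumes feas: "\<forall>l\<in>L. b l \<le> (\<Sum>j\<in>J. a l j * xs j)" "\<forall>j\<in>J. xs j \<ge> 0"
    and opt: "\<And>y. \<forall>l\<in>L. b l \<le> (\<Sum>j\<in>J. a l j * y j) \<Longrightarrow> \<forall>j\<in>J. y j \<ge> 0 \<Longrightarrow>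
                (\<Sum>j\<in>J. d j * xs j) \<le> (\<Sum>j\<in>J. d j * y j)"
    and z: "\<forall>l\<in>L. b l * t \<le> (\<Sum>j\<in>J. a l j * z j)" "\<forall>j\<in>J. z j \<ge> 0" and "t \<ge> 0"
  shows "(\<Sum>j\<in>J. d j * xs j) * t \<le> (\<Sum>j\<in>J. d j * z j)"
proof (cases "t = 0")
  case True
  have "(\<Sum>j\<in>J. d j * xs j) \<le> (\<Sum>j\<in>J. d j * (xs j + z j))"
    using feas z True by (intro opt) (auto simp: distrib_left sum.distrib add_increasing2)
  with True show ?thesis by (simp add: distrib_left sum.distrib)
next
  case False
  with \<open>t \<ge> 0\<close> have "t > 0" by simp
  have "(\<Sum>j\<in>J. d j * xs j) \<le> (\<Sum>j\<in>J. d j * (z j / t))"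
    using z \<open>t > 0\<close> by (intro opt) (auto simp: sum_divide_distrib[symmetric] pos_le_divide_eq)
  with \<open>t > 0\<close> show ?thesis by (simp add: sum_divide_distrib[symmetric] pos_le_divide_eq)
qed

text \<open>The system of the first alternative is the homogenisation of the LP
  \<open>min d x, a x \<ge> b, x \<ge> 0\<close> with \<open>d x \<le> c - 1\<close> added; the variable \<open>None\<close> of the
  enlarged system is the scaling \<open>t\<close>, its row \<open>None\<close> the objective.\<close>
lemma farkas_homogeneous_system:
  fixes a :: "'l \<Rightarrow> 'j \<Rightarrow> real" and b :: "'l \<Rightarrow> real" and d :: "'j \<Rightarrow> real"
  assumes "finite J" "finite L"
  shows "(\<exists>z t. t \<ge> 0 \<and> (\<forall>j\<in>J. z j \<ge> 0) \<and> (\<forall>l\<in>L. b l * t \<le> (\<Sum>j\<in>J. a l j * z j)) \<and>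
                (\<Sum>j\<in>J. d j * z j) \<le> c * t - 1) \<or>
         (\<exists>y s. s > 0 \<and> (\<forall>l\<in>L. y l \<ge> 0) \<and> (\<forall>j\<in>J. (\<Sum>l\<in>L. y l * a l j) \<le> s * d j) \<and>
                s * c \<le> (\<Sum>l\<in>L. y l * b l))"
proof -
  define A where "A r v = (case (r, v) of
      (Some l, Some j) \<Rightarrow> - a l j | (Some l, None) \<Rightarrow> b l
    | (None, Some j) \<Rightarrow> d j | (None, None) \<Rightarrow> - c)" for r v
  define B where "B r = (if r = None then - 1 else 0 :: real)" for r :: "'l option"
  let ?J = "insert None (Some ` J)" and ?L = "insert None (Some ` L)"
  have sum_row: "(\<Sum>v\<in>?J. A r v * x v) = A r None * x None + (\<Sum>j\<in>J. A r (Some j) * x (Some j))"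
    for r x using assms(1) by (rule sum_insert_None_Some)
  have sum_col: "(\<Sum>r\<in>?L. y r * A r v) = y None * A None v + (\<Sum>l\<in>L. y (Some l) * A (Some l) v)"
    for y v using assms(2) by (rule sum_insert_None_Some)
  have "finite ?J" "finite ?L" using assms by auto
  from farkas_nonneg[OF this, where A = A and b = B]
  show ?thesis
  proof (elim disjE exE conjE)
    fix x assume x0: "\<forall>v\<in>?J. x v \<ge> 0" and rows: "\<forall>r\<in>?L. (\<Sum>v\<in>?J. A r v * x v) \<le> B r"
    have "b l * x None \<le> (\<Sum>j\<in>J. a l j * x (Some j))" if "l \<in> L" for l
      using rows that unfolding sum_row by (force simp: A_def B_def sum_negf)
    moreover have "(\<Sum>j\<in>J. d j * x (Some j)) \<le> c * x None - 1"
      using rows unfolding sum_row by (force simp: A_def B_def)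
    ultimately show ?thesis
      using x0 by (intro disjI1 exI[of _ "\<lambda>j. x (Some j)"] exI[of _ "x None"]) auto
  next
    fix y assume y0: "\<forall>r\<in>?L. y r \<ge> 0" and cols: "\<forall>v\<in>?J. (\<Sum>r\<in>?L. y r * A r v) \<ge> 0"
      and neg: "(\<Sum>r\<in>?L. y r * B r) < 0"
    from neg have "y None > 0" unfolding sum_insert_None_Some[OF assms(2)] by (simp add: B_def)
    moreover have "(\<Sum>l\<in>L. y (Some l) * a l j) \<le> y None * d j" if "j \<in> J" for j
      using cols that unfolding sum_col by (force simp: A_def sum_negf)
    moreover have "y None * c \<le> (\<Sum>l\<in>L. y (Some l) * b l)"
      using cols unfolding sum_col by (force simp: A_def)
    ultimately show ?thesis
      using y0 by (intro disjI2 exI[of _ "\<lambda>l. y (Some l)"] exI[of _ "y None"]) auto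
  qed
qed

lemma lp_optimum_dual_certificate:
  fixes a :: "'l \<Rightarrow> 'j \<Rightarrow> real" and b :: "'l \<Rightarrow> real" and d xs :: "'j \<Rightarrow> real"
  assumes "finite J" "finite L"
    and feas: "\<forall>l\<in>L. b l \<le> (\<Sum>j\<in>J. a l j * xs j)" "\<forall>j\<in>J. xs j \<ge> 0"
    and opt: "\<And>y. \<forall>l\<in>L. b l \<le> (\<Sum>j\<in>J. a l j * y j) \<Longrightarrow> \<forall>j\<in>J. y j \<ge> 0 \<Longrightarrow>
                (\<Sum>j\<in>J. d j * xs j) \<le> (\<Sum>j\<in>J. d j * y j)"
  shows "\<exists>u. (\<forall>l\<in>L. u l \<ge> 0) \<and> (\<forall>j\<in>J. (\<Sum>l\<in>L. u l * a l j) \<le> d j) \<and>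
             (\<Sum>j\<in>J. d j * xs j) \<le> (\<Sum>l\<in>L. u l * b l)"
  using farkas_homogeneous_system[OF assms(1,2),
      where a = a and b = b and d = d and c = "\<Sum>j\<in>J. d j * xs j"]
proof (elim disjE exE conjE)
  fix z t assume "t \<ge> 0" "\<forall>j\<in>J. z j \<ge> 0" "\<forall>l\<in>L. b l * t \<le> (\<Sum>j\<in>J. a l j * z j)"
    and "(\<Sum>j\<in>J. d j * z j) \<le> (\<Sum>j\<in>J. d j * xs j) * t - 1"
  with lp_optimum_homogeneous_bound[OF feas opt] show ?thesis by fastforce
next
  fix y s assume "s > 0" "\<forall>l\<in>L. y l \<ge> 0" and col: "\<forall>j\<in>J. (\<Sum>l\<in>L. y l * a l j) \<le> s * d j"
    and bound: "s * (\<Sum>j\<in>J. d j * xs j) \<le> (\<Sum>l\<in>L. y l * b l)"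
  show ?thesis
  proof (intro exI[of _ "\<lambda>l. y l / s"] conjI ballI)
    show "y l / s \<ge> 0" if "l \<in> L" for l
      using \<open>\<forall>l\<in>L. y l \<ge> 0\<close> that \<open>s > 0\<close> by simp
    show "(\<Sum>l\<in>L. y l / s * a l j) \<le> d j" if "j \<in> J" for j
      using col that \<open>s > 0\<close> by (simp add: sum_divide_distrib[symmetric] pos_divide_le_eq mult.commute)
    show "(\<Sum>j\<in>J. d j * xs j) \<le> (\<Sum>l\<in>L. y l / s * b l)"
      using bound \<open>s > 0\<close> by (simp add: sum_divide_distrib[symmetric] pos_le_divide_eq mult.commute)
  qed
qed

lemma weak_duality_row:
  fixes y d q :: "'g \<Rightarrow> real" and a :: "'g \<Rightarrow> 'c \<Rightarrow> real" and r \<alpha> :: "'c \<Rightarrow> real"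
  assumes "\<forall>j\<in>G. y j \<ge> 0" "\<forall>j\<in>G. (\<Sum>k\<in>K. a j k * \<alpha> k) - \<mu> * q j \<le> d j"
    and "\<forall>k\<in>K. \<alpha> k \<ge> 0" "\<forall>k\<in>K. r k \<le> (\<Sum>j\<in>G. a j k * y j)"
  shows "(\<Sum>k\<in>K. r k * \<alpha> k) - \<mu> * (\<Sum>j\<in>G. q j * y j) \<le> (\<Sum>j\<in>G. d j * y j)"
proof -
  have "(\<Sum>k\<in>K. r k * \<alpha> k) \<le> (\<Sum>k\<in>K. (\<Sum>j\<in>G. a j k * y j) * \<alpha> k)"
    using assms(3,4) by (intro sum_mono mult_right_mono) auto
  also have "\<dots> = (\<Sum>j\<in>G. (\<Sum>k\<in>K. a j k * \<alpha> k) * y j)"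
    by (simp add: sum_distrib_left sum_distrib_right sum.swap[of _ K] algebra_simps)
  finally have "(\<Sum>k\<in>K. r k * \<alpha> k) - \<mu> * (\<Sum>j\<in>G. q j * y j)
      \<le> (\<Sum>j\<in>G. ((\<Sum>k\<in>K. a j k * \<alpha> k) - \<mu> * q j) * y j)"
    by (simp add: left_diff_distrib sum_subtractf sum_distrib_left mult.assoc)
  also have "\<dots> \<le> (\<Sum>j\<in>G. d j * y j)"
    using assms(1,2) by (intro sum_mono mult_right_mono) auto
  finally show ?thesis .
qed

lemma LP_DLP_weak_duality:
  assumes "valid_market M" "LP_feasible M Y" "DLP_feasible M lam \<beta> q"
  shows "DLP_obj M \<beta> q \<le> LP_obj M lam Y"
proof -
  let ?A = "agents M" and ?G = "goods M" and ?K = "cidx M"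
  have row: "(\<Sum>k\<in>?K. req M i k * \<beta> i k) - (\<Sum>j\<in>?G. q j * Y i j) \<le> lam i * cost M i (Y i)"
    if "i \<in> ?A" for i
  proof -
    have "(\<Sum>k\<in>?K. req M i k * \<beta> i k) - 1 * (\<Sum>j\<in>?G. q j * Y i j)
        \<le> (\<Sum>j\<in>?G. lam i * delay M i j * Y i j)"
      by (rule weak_duality_row) (use assms(2,3) that in \<open>auto simp: LP_feasible_def DLP_feasible_def\<close>)
    then show ?thesis by (simp add: cost_def sum_distrib_left mult.assoc)
  qed
  have "(\<Sum>i\<in>?A. \<Sum>j\<in>?G. q j * Y i j) = (\<Sum>j\<in>?G. q j * (\<Sum>i\<in>?A. Y i j))"
    by (simp add: sum_distrib_left sum.swap[of _ ?A])
  also have "\<dots> \<le> (\<Sum>j\<in>?G. q j)"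
    using assms(2,3) by (intro sum_mono) (auto simp: LP_feasible_def DLP_feasible_def intro: mult_left_le)
  finally have "(\<Sum>i\<in>?A. \<Sum>j\<in>?G. q j * Y i j) \<le> (\<Sum>j\<in>?G. q j)" .
  moreover have "(\<Sum>i\<in>?A. (\<Sum>k\<in>?K. req M i k * \<beta> i k) - (\<Sum>j\<in>?G. q j * Y i j)) \<le> LP_obj M lam Y"
    unfolding LP_obj_def cost_def[symmetric] by (intro sum_mono row)
  ultimately show ?thesis by (simp add: DLP_obj_def sum_subtractf)
qed

lemma LP_DLP_optimal_if_obj_eq:
  assumes "valid_market M" "LP_feasible M X" "DLP_feasible M lam \<alpha> p"
    and obj: "LP_obj M lam X = DLP_obj M \<alpha> p"
  shows "LP_optimal M lam X \<and> DLP_optimal M lam \<alpha> p"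
proof -
  have "LP_obj M lam X \<le> LP_obj M lam Y" if "LP_feasible M Y" for Y
    using LP_DLP_weak_duality[OF assms(1) that assms(3)] obj by simp
  moreover have "DLP_obj M \<beta> q \<le> DLP_obj M \<alpha> p" if "DLP_feasible M lam \<beta> q" for \<beta> q
    using LP_DLP_weak_duality[OF assms(1,2) that] obj by simp
  ultimately show ?thesis using assms(2,3) by (simp add: LP_optimal_def DLP_optimal_def)
qed

text \<open>The budget enters the agent's LP as the covering constraint \<open>- p x \<ge> - m\<close>, row \<open>None\<close>.\<close>
lemma optimal_bundle_multipliers:
  assumes "valid_market M" "i \<in> agents M" "optimal_bundle M p i x"
  shows "\<exists>\<alpha> \<mu>. (\<forall>k\<in>cidx M. \<alpha> k \<ge> 0) \<and> \<mu> \<ge> 0 \<and>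
           (\<forall>j\<in>goods M. (\<Sum>k\<in>cidx M. coef M i j k * \<alpha> k) - \<mu> * p j \<le> delay M i j) \<and>
           cost M i x \<le> (\<Sum>k\<in>cidx M. req M i k * \<alpha> k) - \<mu> * budget M i"
proof -
  let ?G = "goods M" and ?K = "cidx M"
  have fin: "finite ?G" "finite ?K" "finite (insert None (Some ` ?K))"
    using assms(1) by (auto simp: valid_market_def)
  define a where "a l j = (case l of None \<Rightarrow> - p j | Some k \<Rightarrow> coef M i j k)" for l j
  define b where "b l = (case l of None \<Rightarrow> - budget M i | Some k \<Rightarrow> req M i k)" for l
  have constraints: "(\<forall>l\<in>insert None (Some ` ?K). b l \<le> (\<Sum>j\<in>?G. a l j * y j)) \<longleftrightarrow>
      (\<forall>k\<in>?K. req M i k \<le> (\<Sum>j\<in>?G. coef M i j k * y j)) \<and> (\<Sum>j\<in>?G. p j * y j) \<le> budget M i"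
    for y by (auto simp: a_def b_def sum_negf)
  have feas: "\<forall>l\<in>insert None (Some ` ?K). b l \<le> (\<Sum>j\<in>?G. a l j * x j)" "\<forall>j\<in>?G. x j \<ge> 0"
    using assms(3) unfolding constraints by (auto simp: optimal_bundle_def CC_def)
  have opt: "(\<Sum>j\<in>?G. delay M i j * x j) \<le> (\<Sum>j\<in>?G. delay M i j * y j)"
    if "\<forall>l\<in>insert None (Some ` ?K). b l \<le> (\<Sum>j\<in>?G. a l j * y j)" "\<forall>j\<in>?G. y j \<ge> 0" for y
    using assms(3) that unfolding constraints by (auto simp: optimal_bundle_def CC_def cost_def)
  from lp_optimum_dual_certificate[OF fin(1,3) feas opt]
  obtain u where u0: "\<forall>l\<in>insert None (Some ` ?K). u l \<ge> 0"
    and dual: "\<forall>j\<in>?G. (\<Sum>l\<in>insert None (Some ` ?K). u l * a l j) \<le> delay M i j"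
    and bound: "(\<Sum>j\<in>?G. delay M i j * x j) \<le> (\<Sum>l\<in>insert None (Some ` ?K). u l * b l)"
    by blast
  show ?thesis
  proof (intro exI[of _ "\<lambda>k. u (Some k)"] exI[of _ "u None"] conjI ballI)
    show "(\<Sum>k\<in>?K. coef M i j k * u (Some k)) - u None * p j \<le> delay M i j" if "j \<in> ?G" for j
      using dual that by (simp add: sum_insert_None_Some[OF fin(2)] a_def mult.commute)
    show "cost M i x \<le> (\<Sum>k\<in>?K. req M i k * u (Some k)) - u None * budget M i"
      using bound by (simp add: sum_insert_None_Some[OF fin(2)] b_def cost_def mult.commute)
  qed (use u0 in auto)
qed

lemma cost_ge_multiplier_bound:
  assumes "\<forall>k\<in>cidx M. \<alpha> k \<ge> 0"
    and "\<forall>j\<in>goods M. (\<Sum>k\<in>cidx M. coef M i j k * \<alpha> k) - \<mu> * p j \<le> delay M i j"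
    and "CC M i y"
  shows "(\<Sum>k\<in>cidx M. req M i k * \<alpha> k) - \<mu> * (\<Sum>j\<in>goods M. p j * y j) \<le> cost M i y"
  unfolding cost_def by (rule weak_duality_row) (use assms in \<open>auto simp: CC_def\<close>)

lemma equilibrium_bundle_le_one:
  assumes "valid_market M" "market_equilibrium M X p" "i \<in> agents M" "j \<in> goods M"
  shows "X i j \<le> 1"
proof -
  have "X i' j \<ge> 0" if "i' \<in> agents M" for i'
    using assms(2,4) that by (auto simp: market_equilibrium_def optimal_bundle_def CC_def)
  then have "X i j \<le> (\<Sum>i'\<in>agents M. X i' j)"
    using assms(1,3) by (intro member_le_sum) (auto simp: valid_market_def)
  also have "\<dots> \<le> 1" using assms(2,4) by (simp add: market_equilibrium_def)
  finally show ?thesis .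
qed

lemma equilibrium_budget_multiplier_pos:
  assumes "valid_market M" "sufficient_demand M" "market_equilibrium M X p" "i \<in> agents M"
    and "\<forall>k\<in>cidx M. \<alpha> k \<ge> 0" "\<mu> \<ge> 0"
    and dual: "\<forall>j\<in>goods M. (\<Sum>k\<in>cidx M. coef M i j k * \<alpha> k) - \<mu> * p j \<le> delay M i j"
    and bound: "cost M i (X i) \<le> (\<Sum>k\<in>cidx M. req M i k * \<alpha> k) - \<mu> * budget M i"
  shows "\<mu> > 0"
proof (rule ccontr)
  assume "\<not> \<mu> > 0"
  with \<open>\<mu> \<ge> 0\<close> have "\<mu> = 0" by simp
  have "CC M i (X i)"
    using assms(3,4) by (simp add: market_equilibrium_def optimal_bundle_def)
  moreover have "cost M i (X i) \<le> cost M i y" if "CC M i y" for y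
    using cost_ge_multiplier_bound[OF assms(5) dual that] bound \<open>\<mu> = 0\<close> by simp
  ultimately obtain j where "j \<in> goods M" "X i j > 1"
    using assms(2,4) unfolding sufficient_demand_def by blast
  with equilibrium_bundle_le_one[OF assms(1,3,4)] show False by force
qed

lemma equilibrium_agent_dual:
  assumes "valid_market M" "sufficient_demand M" "market_equilibrium M X p" "i \<in> agents M"
  shows "\<exists>l \<alpha>. l > 0 \<and> (\<forall>k\<in>cidx M. \<alpha> k \<ge> 0) \<and>
           (\<forall>j\<in>goods M. (\<Sum>k\<in>cidx M. coef M i j k * \<alpha> k) - p j \<le> l * delay M i j) \<and>
           l * cost M i (X i) = (\<Sum>k\<in>cidx M. req M i k * \<alpha> k) - budget M i \<and>
           (\<Sum>j\<in>goods M. p j * X i j) = budget M i"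
proof -
  have opt: "optimal_bundle M p i (X i)"
    using assms(3,4) by (simp add: market_equilibrium_def)
  obtain \<alpha> \<mu> where \<alpha>0: "\<forall>k\<in>cidx M. \<alpha> k \<ge> 0" and "\<mu> \<ge> 0"
    and dual: "\<forall>j\<in>goods M. (\<Sum>k\<in>cidx M. coef M i j k * \<alpha> k) - \<mu> * p j \<le> delay M i j"
    and bound: "cost M i (X i) \<le> (\<Sum>k\<in>cidx M. req M i k * \<alpha> k) - \<mu> * budget M i"
    using optimal_bundle_multipliers[OF assms(1,4) opt] by blast
  have "\<mu> > 0"
    by (rule equilibrium_budget_multiplier_pos) (use assms \<alpha>0 \<open>\<mu> \<ge> 0\<close> dual bound in auto)
  have lower: "(\<Sum>k\<in>cidx M. req M i k * \<alpha> k) - \<mu> * (\<Sum>j\<in>goods M. p j * X i j) \<le> cost M i (X i)"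
    using cost_ge_multiplier_bound[OF \<alpha>0 dual] opt by (simp add: optimal_bundle_def)
  have "\<mu> * budget M i \<le> \<mu> * (\<Sum>j\<in>goods M. p j * X i j)"
    using lower bound by simp
  then have spent: "(\<Sum>j\<in>goods M. p j * X i j) = budget M i"
    using \<open>\<mu> > 0\<close> opt by (simp add: optimal_bundle_def)
  show ?thesis
  proof (intro exI[of _ "1 / \<mu>"] exI[of _ "\<lambda>k. \<alpha> k / \<mu>"] conjI ballI)
    show "(\<Sum>k\<in>cidx M. coef M i j k * (\<alpha> k / \<mu>)) - p j \<le> 1 / \<mu> * delay M i j"
      if "j \<in> goods M" for j
    proof -
      have "((\<Sum>k\<in>cidx M. coef M i j k * \<alpha> k) - \<mu> * p j) / \<mu> \<le> delay M i j / \<mu>"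
        using dual that \<open>\<mu> > 0\<close> by (simp add: divide_right_mono)
      with \<open>\<mu> > 0\<close> show ?thesis by (simp add: diff_divide_distrib sum_divide_distrib)
    qed
    show "1 / \<mu> * cost M i (X i) = (\<Sum>k\<in>cidx M. req M i k * (\<alpha> k / \<mu>)) - budget M i"
      using lower bound spent \<open>\<mu> > 0\<close> by (simp add: sum_divide_distrib[symmetric] field_simps)
  qed (use \<alpha>0 \<open>\<mu> > 0\<close> spent in auto)
qed

lemma equilibrium_budgets_eq_prices:
  assumes "valid_market M" "market_equilibrium M X p"
    and "\<forall>i\<in>agents M. (\<Sum>j\<in>goods M. p j * X i j) = budget M i"
  shows "(\<Sum>i\<in>agents M. budget M i) = (\<Sum>j\<in>goods M. p j)"
proof -
  have "(\<Sum>i\<in>agents M. budget M i) = (\<Sum>j\<in>goods M. p j * (\<Sum>i\<in>agents M. X i j))"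
    using assms(3) by (simp add: sum_distrib_left sum.swap[of _ "agents M"])
  also have "\<dots> = (\<Sum>j\<in>goods M. p j)"
    using assms(2) by (intro sum.cong) (force simp: market_equilibrium_def)+
  finally show ?thesis .
qed

lemma equilibrium_scaled_multipliers:
  assumes "valid_market M" "sufficient_demand M" "market_equilibrium M X p"
  obtains lam \<alpha> where "\<forall>i\<in>agents M. lam i > 0" "\<forall>i\<in>agents M. \<forall>k\<in>cidx M. \<alpha> i k \<ge> 0"
    and "DLP_feasible M lam \<alpha> p"
    and "\<forall>i\<in>agents M. lam i * cost M i (X i) = (\<Sum>k\<in>cidx M. req M i k * \<alpha> i k) - budget M i"
    and "\<forall>i\<in>agents M. (\<Sum>j\<in>goods M. p j * X i j) = budget M i"
proof -
  from bchoice[OF ballI[OF equilibrium_agent_dual[OF assms]]]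
  obtain lam where "\<forall>i\<in>agents M. \<exists>\<alpha>. lam i > 0 \<and> (\<forall>k\<in>cidx M. \<alpha> k \<ge> 0) \<and>
      (\<forall>j\<in>goods M. (\<Sum>k\<in>cidx M. coef M i j k * \<alpha> k) - p j \<le> lam i * delay M i j) \<and>
      lam i * cost M i (X i) = (\<Sum>k\<in>cidx M. req M i k * \<alpha> k) - budget M i \<and>
      (\<Sum>j\<in>goods M. p j * X i j) = budget M i"
    by (rule exE)
  from bchoice[OF this] obtain \<alpha> where agent: "\<forall>i\<in>agents M. lam i > 0 \<and> (\<forall>k\<in>cidx M. \<alpha> i k \<ge> 0) \<and>
      (\<forall>j\<in>goods M. (\<Sum>k\<in>cidx M. coef M i j k * \<alpha> i k) - p j \<le> lam i * delay M i j) \<and>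
      lam i * cost M i (X i) = (\<Sum>k\<in>cidx M. req M i k * \<alpha> i k) - budget M i \<and>
      (\<Sum>j\<in>goods M. p j * X i j) = budget M i"
    by (rule exE)
  moreover have "DLP_feasible M lam \<alpha> p"
    using agent assms(3) by (simp add: DLP_feasible_def market_equilibrium_def)
  ultimately show thesis by (intro that) auto
qed

theorem lemmaE3:
  fixes M :: "('a, 'g, 'c) market"
    and X :: "'a \<Rightarrow> 'g \<Rightarrow> real" and p :: "'g \<Rightarrow> real"
  assumes "valid_market M"
    and "sufficient_demand M"
    and "market_equilibrium M X p"
  shows "\<exists>lam :: 'a \<Rightarrow> real. \<exists>\<alpha> :: 'a \<Rightarrow> 'c \<Rightarrow> real.
           (\<forall>i\<in>agents M. lam i > 0) \<and>
           (\<forall>i\<in>agents M. \<forall>k\<in>cidx M. \<alpha> i k \<ge> 0) \<and>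
           LP_optimal M lam X \<and> DLP_optimal M lam \<alpha> p"
proof -
  obtain lam \<alpha> where pos: "\<forall>i\<in>agents M. lam i > 0" "\<forall>i\<in>agents M. \<forall>k\<in>cidx M. \<alpha> i k \<ge> 0"
    and dual: "DLP_feasible M lam \<alpha> p"
    and objective: "\<forall>i\<in>agents M. lam i * cost M i (X i) = (\<Sum>k\<in>cidx M. req M i k * \<alpha> i k) - budget M i"
    and spent: "\<forall>i\<in>agents M. (\<Sum>j\<in>goods M. p j * X i j) = budget M i"
    using equilibrium_scaled_multipliers[OF assms] by blast
  have primal: "LP_feasible M X"
    using assms(3) by (auto simp: LP_feasible_def market_equilibrium_def optimal_bundle_def CC_def)
  have "LP_obj M lam X = (\<Sum>i\<in>agents M. (\<Sum>k\<in>cidx M. req M i k * \<alpha> i k) - budget M i)"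
    using objective by (simp add: LP_obj_def cost_def)
  also have "\<dots> = DLP_obj M \<alpha> p"
    using equilibrium_budgets_eq_prices[OF assms(1,3) spent] by (simp add: DLP_obj_def sum_subtractf)
  finally have "LP_obj M lam X = DLP_obj M \<alpha> p" .
  with LP_DLP_optimal_if_obj_eq[OF assms(1) primal dual] pos show ?thesis by blast
qed

end
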